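(* Suppose $h(t)-g(t)>0$ for $t\in[\alpha,\beta]$, and that $$q(\vartheta)>\frac{g(\vartheta)-h(\vartheta)}2\quad\text{and}\quad r(\vartheta)<\frac{h(\vartheta)-g(\vartheta)}2\qquad\text{for all }\vartheta\in\Theta.$$ Then $\Phi$ is strictly decreasing on $(\alpha,\vartheta_0]$ and strictly increasing on $[\vartheta_0,\beta)$, so $\vartheta_0$ is its unique point of minimum on $\Theta$, and the pseudo-MLE $\hat\vartheta_\varepsilon$ is consistent: $\hat\vartheta_\varepsilon\to\vartheta_0$ in probability as $\varepsilon\to0$.
   Context: Fix $T>0$, $0<\alpha<\beta<T$, $\Theta=(\alpha,\beta)$, true value $\vartheta_0\in\Theta$, and continuous bounded functions $h,g,q,r$ on $[0,T]$. The observed process is $X_t=\int_0^tS(\vartheta_0,s)ds+\varepsilon W_t$, $0\le t\le T$, with $W$ a standard Wiener process and $S(\vartheta_0,t)=[h(t)+q(t)]\mathbf 1_{\{t<\vartheta_0\}}+[g(t)+r(t)]\mathbf 1_{\{t\ge\vartheta_0\}}$ ($q,r$ unknown to the statistician). The statistician uses the model ${\rm d}X_t=M(\vartheta,t){\rm d}t+\varepsilon{\rm d}W_t$ with $M(\vartheta,t)=h(t)\mathbf 1_{\{t<\vartheta\}}+g(t)\mathbf 1_{\{t\ge\vartheta\}}$, pseudo-likelihood $V(\vartheta,X^T)=\exp\{\varepsilon^{-2}\int_0^TM(\vartheta,t){\rm d}X_t-\frac1{2\varepsilon^2}\int_0^TM(\vartheta,t)^2{\rm d}t\}$, and pseudo-MLE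 $\hat\vartheta_\varepsilon$ a (measurable) maximizer of $V(\cdot,X^T)$ over $[\alpha,\beta]$. $\Phi(\vartheta)=\int_0^T[M(\vartheta,t)-S(\vartheta_0,t)]^2{\rm d}t$. *)

theory Defs
  imports "HOL-Probability.Probability"
begin

definition wiener_process :: "'a measure \<Rightarrow> real \<Rightarrow> (real \<Rightarrow> 'a \<Rightarrow> real) \<Rightarrow> bool" where
  "wiener_process P T W \<longleftrightarrow>
     prob_space P \<and>
     (\<forall>t\<in>{0..T}. W t \<in> borel_measurable P) \<and>
     (\<forall>\<omega>\<in>space P. W 0 \<omega> = 0) \<and>
     (\<forall>\<omega>\<in>space P. continuous_on {0..T} (\<lambda>t. W t \<omega>)) \<and>
     (\<forall>s t. 0 \<le> s \<and> s < t \<and> t \<le> T \<longrightarrow>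
        distributed P lborel (\<lambda>\<omega>. W t \<omega> - W s \<omega>)
          (\<lambda>x. ennreal (normal_density 0 (sqrt (t - s)) x))) \<and>
     (\<forall>(ts :: nat \<Rightarrow> real) n. 0 \<le> ts 0 \<and> ts n \<le> T \<and> (\<forall>i<n. ts i < ts (Suc i)) \<longrightarrow>
        prob_space.indep_vars P (\<lambda>_. borel) (\<lambda>i \<omega>. W (ts (Suc i)) \<omega> - W (ts i) \<omega>) {..<n})"

definition wiener_integral ::
  "'a measure \<Rightarrow> real \<Rightarrow> (real \<Rightarrow> 'a \<Rightarrow> real) \<Rightarrow> (real \<Rightarrow> real) \<Rightarrow> ('a \<Rightarrow> real) \<Rightarrow> bool" where
  "wiener_integral P T W f Y \<longleftrightarrow>
     Y \<in> borel_measurable P \<and>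
     (\<forall>e>0. ((\<lambda>n::nat. measure P {\<omega>\<in>space P.
          e < \<bar>(\<Sum>k<n. f (real k * T / real n) *
                 (W (real (Suc k) * T / real n) \<omega> - W (real k * T / real n) \<omega>)) - Y \<omega>\<bar>})
        \<longlonglongrightarrow> 0))"

definition Mtrend :: "(real \<Rightarrow> real) \<Rightarrow> (real \<Rightarrow> real) \<Rightarrow> real \<Rightarrow> real \<Rightarrow> real" where
  "Mtrend h g th t = (if t < th then h t else g t)"

definition Strend :: "(real \<Rightarrow> real) \<Rightarrow> (real \<Rightarrow> real) \<Rightarrow> (real \<Rightarrow> real) \<Rightarrow> (real \<Rightarrow> real)
    \<Rightarrow> real \<Rightarrow> real \<Rightarrow> real" where
  "Strend h g q r th0 t = (if t < th0 then h t + q t else g t + r t)"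

definition Phi :: "real \<Rightarrow> (real \<Rightarrow> real) \<Rightarrow> (real \<Rightarrow> real) \<Rightarrow> (real \<Rightarrow> real) \<Rightarrow> (real \<Rightarrow> real)
    \<Rightarrow> real \<Rightarrow> real \<Rightarrow> real" where
  "Phi T h g q r th0 th =
     integral {0..T} (\<lambda>t. (Mtrend h g th t - Strend h g q r th0 t)\<^sup>2)"

text \<open>Pseudo-likelihood V(th, X^T) for the observation X_t = \<integral>_0^t S ds + eps W_t, where
  \<open>\<integral>_0^T M(th,t) dX_t = \<integral>_0^T M(th,t) S(th0,t) dt + eps IW th\<close>
  and IW th is the Wiener integral \<open>\<integral>_0^T M(th,t) dW_t\<close>.\<close>
definition pseudo_lik :: "real \<Rightarrow> (real \<Rightarrow> real) \<Rightarrow> (real \<Rightarrow> real) \<Rightarrow> (real \<Rightarrow> real) \<Rightarrow> (real \<Rightarrow> real)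
    \<Rightarrow> real \<Rightarrow> (real \<Rightarrow> 'a \<Rightarrow> real) \<Rightarrow> real \<Rightarrow> real \<Rightarrow> 'a \<Rightarrow> real" where
  "pseudo_lik T h g q r th0 IW eps th \<omega> =
     exp ((1 / eps\<^sup>2) * (integral {0..T} (\<lambda>t. Mtrend h g th t * Strend h g q r th0 t) + eps * IW th \<omega>)
          - (1 / (2 * eps\<^sup>2)) * integral {0..T} (\<lambda>t. (Mtrend h g th t)\<^sup>2))"

end

(*
  Moving the switch point of the model trend from x to y changes it only on [x, y), so
  Phi y - Phi x is the integral over [x, y] of (h - S)^2 - (g - S)^2. Before the change point
  this integrand is -(h - g)(h - g + 2q), after it (h - g)(h - g - 2r); the hypotheses make
  Phi strictly decreasing and then strictly increasing, so th0 is a well-separated minimum.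
  The log pseudo-likelihood is (C - Phi th)/(2 eps^2) + IW th/eps, so the pseudo-MLE maximises
  2 eps IW - Phi. Landing at distance more than delta from th0 costs some kappa > 0 in Phi,
  which forces sup |IW| >= kappa/(4 eps); as IW has continuous, hence bounded, paths, the
  probability of that event tends to 0.
*)

theory Submission imports Defs begin

lemma integrable_if_less:
  fixes u v :: "real \<Rightarrow> 'b::banach"
  assumes "u integrable_on {a..b}" "v integrable_on {a..b}"
  shows "(\<lambda>t. if t < c then u t else v t) integrable_on {a..b}"
proof -
  have split: "{..c} \<inter> {a..b} = {a..min b c}" "{c..} \<inter> {a..b} = {max a c..b}"
    by auto
  have "(\<lambda>t. if t \<in> {..c} then u t else 0) integrable_on {a..b}"
    "(\<lambda>t. if t \<in> {c..} then v t else 0) integrable_on {a..b}"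
    unfolding integrable_restrict_Int split
    by (auto intro: integrable_on_subinterval[OF assms(1)] integrable_on_subinterval[OF assms(2)])
  then have "(\<lambda>t. (if t \<in> {..c} then u t else 0) + (if t \<in> {c..} then v t else 0))
      integrable_on {a..b}"
    by (rule integrable_add)
  then show ?thesis
    by (rule integrable_spike_finite[of "{c}", rotated 2]) auto
qed

lemma integrable_on_switching_pair:
  fixes \<phi> :: "real \<Rightarrow> real \<Rightarrow> real" and u\<^sub>1 u\<^sub>2 v\<^sub>1 v\<^sub>2 :: "real \<Rightarrow> real"
  assumes "continuous_on UNIV (\<lambda>z. \<phi> (fst z) (snd z))"
    and "continuous_on {a..b} u\<^sub>1" "continuous_on {a..b} u\<^sub>2"
    and "continuous_on {a..b} v\<^sub>1" "continuous_on {a..b} v\<^sub>2"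
  shows "(\<lambda>t. \<phi> (if t < c then u\<^sub>1 t else u\<^sub>2 t) (if t < d then v\<^sub>1 t else v\<^sub>2 t)) integrable_on {a..b}"
proof -
  have cont: "continuous_on {a..b} (\<lambda>t. \<phi> (u t) (v t))"
    if "continuous_on {a..b} u" "continuous_on {a..b} v" for u v
    using continuous_on_compose2[OF assms(1), of "{a..b}" "\<lambda>t. (u t, v t)"] that
    by (auto intro: continuous_intros)
  have "(\<lambda>t. if t < c then (if t < d then \<phi> (u\<^sub>1 t) (v\<^sub>1 t) else \<phi> (u\<^sub>1 t) (v\<^sub>2 t))
             else (if t < d then \<phi> (u\<^sub>2 t) (v\<^sub>1 t) else \<phi> (u\<^sub>2 t) (v\<^sub>2 t))) integrable_on {a..b}"
    by (intro integrable_if_less integrable_continuous_interval cont) (use assms in auto)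
  then show ?thesis
    by (rule rev_iffD1, intro integrable_cong) auto
qed

lemma integral_pos_of_pos_on_interior:
  fixes G :: "real \<Rightarrow> real"
  assumes cont: "continuous_on {x..y} G" and "x < y" and pos: "\<And>t. t \<in> {x<..<y} \<Longrightarrow> 0 < G t"
  shows "0 < integral {x..y} G"
proof -
  define x' y' where "x' = (3 * x + y) / 4" and "y' = (x + 3 * y) / 4"
  have inner: "{x'..y'} \<subseteq> {x<..<y}" and "x' < y'"
    using \<open>x < y\<close> by (auto simp: x'_def y'_def)
  have "{x'..y'} \<subseteq> {x..y}" and "{x'..y'} \<noteq> {}"
    using \<open>x < y\<close> by (auto simp: x'_def y'_def)
  then have cont': "continuous_on {x'..y'} G"
    using continuous_on_subset[OF cont] by blast
  obtain t\<^sub>0 where t\<^sub>0: "t\<^sub>0 \<in> {x'..y'}" "\<And>s. s \<in> {x'..y'} \<Longrightarrow> G t\<^sub>0 \<le> G s"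
    using continuous_attains_inf[OF compact_Icc \<open>{x'..y'} \<noteq> {}\<close> cont'] by blast
  have "0 < (y' - x') * G t\<^sub>0"
    using inner t\<^sub>0(1) pos \<open>x' < y'\<close> by auto
  also have "\<dots> = integral {x'..y'} (\<lambda>t. G t\<^sub>0)"
    using \<open>x' < y'\<close> by simp
  also have "\<dots> \<le> integral {x'..y'} G"
    by (rule integral_le[OF integrable_const_ivl integrable_continuous_interval[OF cont'] t\<^sub>0(2)])
  also have "\<dots> \<le> integral {x..y} G"
  proof (rule integral_subset_le)
    show "\<forall>t\<in>{x..y}. 0 \<le> G t"
    proof
      fix t assume "t \<in> {x..y}"
      show "0 \<le> G t"
        by (rule continuous_ge_on_closure[of "{x<..<y}"])
           (use \<open>t \<in> {x..y}\<close> \<open>x < y\<close> cont pos in \<open>auto intro: less_imp_le\<close>)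
    qed
  qed (use \<open>{x'..y'} \<subseteq> {x..y}\<close> cont cont' in \<open>auto intro: integrable_continuous_interval\<close>)
  finally show ?thesis .
qed

lemma well_separated_min:
  fixes F :: "real \<Rightarrow> real"
  assumes anti: "strict_antimono_on {a..c} F" and mono: "strict_mono_on {c..b} F"
    and "a < c" "c < b" "0 < \<delta>"
  obtains \<kappa> where "0 < \<kappa>" "\<And>\<theta>. \<theta> \<in> {a..b} \<Longrightarrow> \<delta> < \<bar>\<theta> - c\<bar> \<Longrightarrow> F c + \<kappa> \<le> F \<theta>"
proof -
  define \<delta>' where "\<delta>' = min \<delta> (min (c - a) (b - c))"
  have \<delta>': "0 < \<delta>'" "\<delta>' \<le> \<delta>" "a \<le> c - \<delta>'" "c + \<delta>' \<le> b"
    using assms by (auto simp: \<delta>'_def)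
  have left: "F c < F (c - \<delta>')"
    using monotone_onD[OF anti, of "c - \<delta>'" c] \<delta>' by auto
  have right: "F c < F (c + \<delta>')"
    using strict_mono_onD[OF mono, of c "c + \<delta>'"] \<delta>' by auto
  show ?thesis
  proof (rule that[of "min (F (c - \<delta>') - F c) (F (c + \<delta>') - F c)"])
    show "0 < min (F (c - \<delta>') - F c) (F (c + \<delta>') - F c)"
      using left right by simp
    fix \<theta> assume \<theta>: "\<theta> \<in> {a..b}" "\<delta> < \<bar>\<theta> - c\<bar>"
    then consider "\<theta> < c - \<delta>'" | "c + \<delta>' < \<theta>"
      using \<delta>' by (cases "\<theta> < c") auto
    then show "F c + min (F (c - \<delta>') - F c) (F (c + \<delta>') - F c) \<le> F \<theta>"
    proof cases
      case 1
      then have "F (c - \<delta>') < F \<theta>"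
        using monotone_onD[OF anti, of \<theta> "c - \<delta>'"] \<theta> \<delta>' by auto
      then show ?thesis by linarith
    next
      case 2
      then have "F (c + \<delta>') < F \<theta>"
        using strict_mono_onD[OF mono, of "c + \<delta>'" \<theta>] \<theta> \<delta>' by auto
      then show ?thesis by linarith
    qed
  qed
qed

lemma continuous_on_abs_bound_from_rationals:
  fixes f :: "real \<Rightarrow> real"
  assumes "continuous_on {a..b} f" "a < b" "\<And>\<theta>. \<theta> \<in> {a..b} \<inter> \<rat> \<Longrightarrow> \<bar>f \<theta>\<bar> \<le> C"
    and "\<theta> \<in> {a..b}"
  shows "\<bar>f \<theta>\<bar> \<le> C"
proof -
  have "{a..b} = closure ({a<..<b} \<inter> \<rat>)"
    using closure_open_Int_superset[of "{a<..<b}" \<rat>] Rats_closure_real \<open>a < b\<close> by simp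
  also have "\<dots> \<subseteq> closure ({a..b} \<inter> \<rat>)"
    by (intro closure_mono) auto
  finally have dense: "closure ({a..b} \<inter> \<rat>) = {a..b}"
    by (simp add: closure_minimal subset_antisym)
  have "f ` ({a..b} \<inter> \<rat>) \<subseteq> {-C..C}"
  proof (rule image_subsetI)
    fix \<theta> assume "\<theta> \<in> {a..b} \<inter> \<rat>"
    from assms(3)[OF this] show "f \<theta> \<in> {-C..C}"
      by (auto simp: abs_le_iff)
  qed
  then have "f ` closure ({a..b} \<inter> \<rat>) \<subseteq> {-C..C}"
    using assms(1) by (intro image_closure_subset) (simp_all add: dense)
  then have "f \<theta> \<in> {-C..C}"
    using assms(4) by (simp add: dense image_subset_iff)
  then show ?thesis
    by auto
qed

text \<open>Path continuity reduces the supremum over \<open>{a..b}\<close> to one over the rationals,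
  which makes the event measurable.\<close>

lemma sets_Collect_sup_abs_gt:
  fixes Z :: "real \<Rightarrow> 'a \<Rightarrow> real"
  assumes "a < b" and meas: "\<And>\<theta>. \<theta> \<in> {a..b} \<Longrightarrow> Z \<theta> \<in> borel_measurable M"
    and cont: "\<And>\<omega>. \<omega> \<in> space M \<Longrightarrow> continuous_on {a..b} (\<lambda>\<theta>. Z \<theta> \<omega>)"
  shows "{\<omega> \<in> space M. \<exists>\<theta>\<in>{a..b}. c < \<bar>Z \<theta> \<omega>\<bar>} \<in> sets M"
proof -
  have "{\<omega> \<in> space M. \<exists>\<theta>\<in>{a..b}. c < \<bar>Z \<theta> \<omega>\<bar>} = {\<omega> \<in> space M. \<exists>\<theta>\<in>{a..b} \<inter> \<rat>. c < \<bar>Z \<theta> \<omega>\<bar>}"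
    using continuous_on_abs_bound_from_rationals[OF cont \<open>a < b\<close>] by (fastforce simp: not_less)
  also have "\<dots> \<in> sets M"
  proof (rule sets.sets_Collect_countable_Ex')
    fix \<theta> assume "\<theta> \<in> {a..b} \<inter> \<rat>"
    then have "(\<lambda>\<omega>. \<bar>Z \<theta> \<omega>\<bar>) \<in> borel_measurable M"
      using meas by auto
    then show "{\<omega> \<in> space M. c < \<bar>Z \<theta> \<omega>\<bar>} \<in> sets M"
      unfolding borel_measurable_iff_greater by blast
  qed (simp add: countable_rat)
  finally show ?thesis .
qed

lemma (in finite_measure) measure_sup_abs_gt_tendsto_zero:
  fixes Z :: "real \<Rightarrow> 'a \<Rightarrow> real"
  assumes "a < b" and meas: "\<And>\<theta>. \<theta> \<in> {a..b} \<Longrightarrow> Z \<theta> \<in> borel_measurable M"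
    and cont: "\<And>\<omega>. \<omega> \<in> space M \<Longrightarrow> continuous_on {a..b} (\<lambda>\<theta>. Z \<theta> \<omega>)"
  shows "(\<lambda>N. measure M {\<omega> \<in> space M. \<exists>\<theta>\<in>{a..b}. real N < \<bar>Z \<theta> \<omega>\<bar>}) \<longlonglongrightarrow> 0"
proof -
  let ?B = "\<lambda>N::nat. {\<omega> \<in> space M. \<exists>\<theta>\<in>{a..b}. real N < \<bar>Z \<theta> \<omega>\<bar>}"
  have "(\<Inter>N. ?B N) = {}"
  proof safe
    fix \<omega> assume \<omega>: "\<omega> \<in> (\<Inter>N. ?B N)"
    then have "\<omega> \<in> space M" by auto
    then obtain C where C: "\<And>\<theta>. \<theta> \<in> {a..b} \<Longrightarrow> norm (Z \<theta> \<omega>) \<le> C"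
      using continuous_on_compact_bound[OF compact_Icc cont] by metis
    obtain N :: nat where "C < real N"
      using reals_Archimedean2 by blast
    moreover obtain \<theta> where "\<theta> \<in> {a..b}" "real N < \<bar>Z \<theta> \<omega>\<bar>"
      using \<omega> by blast
    ultimately show "\<omega> \<in> {}"
      using C[of \<theta>] by simp
  qed
  moreover have "(\<lambda>N. measure M (?B N)) \<longlonglongrightarrow> measure M (\<Inter>N. ?B N)"
  proof (rule finite_Lim_measure_decseq)
    show "range ?B \<subseteq> sets M"
      using sets_Collect_sup_abs_gt[OF assms] by blast
    show "decseq ?B"
    proof (rule antimonoI, safe)
      fix m n :: nat and \<omega> \<theta> assume "m \<le> n" "\<theta> \<in> {a..b}" "real n < \<bar>Z \<theta> \<omega>\<bar>"
      then show "\<exists>\<theta>\<in>{a..b}. real m < \<bar>Z \<theta> \<omega>\<bar>"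
        by (intro bexI[of _ \<theta>]) auto
    qed
  qed
  ultimately show ?thesis
    by simp
qed

lemma argmax_gap_le_noise:
  fixes F z :: "real \<Rightarrow> real"
  assumes "\<theta>\<^sub>0 \<in> S" "\<theta> \<in> S" "F \<theta>\<^sub>0 + \<kappa> \<le> F \<theta>"
    and "2 * eps * z \<theta>\<^sub>0 - F \<theta>\<^sub>0 \<le> 2 * eps * z \<theta> - F \<theta>"
    and "0 \<le> eps" "\<And>s. s \<in> S \<Longrightarrow> \<bar>z s\<bar> \<le> N"
  shows "\<kappa> \<le> 4 * eps * N"
proof -
  have "\<kappa> \<le> 2 * eps * (z \<theta> - z \<theta>\<^sub>0)"
    using assms(3,4) by (simp add: algebra_simps)
  also have "\<dots> \<le> 2 * eps * (2 * N)"
    using assms(1,2,5) assms(6)[of \<theta>] assms(6)[of \<theta>\<^sub>0] by (intro mult_left_mono) auto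
  finally show ?thesis
    by simp
qed

text \<open>No measurability of \<open>est\<close> is needed: the event is dominated by a measurable one.\<close>

lemma (in prob_space) argmax_consistent:
  fixes Z :: "real \<Rightarrow> 'a \<Rightarrow> real" and F :: "real \<Rightarrow> real" and est :: "real \<Rightarrow> 'a \<Rightarrow> real"
  assumes "a < b" and meas: "\<And>\<theta>. \<theta> \<in> {a..b} \<Longrightarrow> Z \<theta> \<in> borel_measurable M"
    and cont: "\<And>\<omega>. \<omega> \<in> space M \<Longrightarrow> continuous_on {a..b} (\<lambda>\<theta>. Z \<theta> \<omega>)"
    and "\<theta>\<^sub>0 \<in> {a..b}" "0 < \<kappa>"
    and separated: "\<And>\<theta>. \<theta> \<in> {a..b} \<Longrightarrow> \<delta> < \<bar>\<theta> - \<theta>\<^sub>0\<bar> \<Longrightarrow> F \<theta>\<^sub>0 + \<kappa> \<le> F \<theta>"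
    and est: "\<And>eps \<omega>. 0 < eps \<Longrightarrow> \<omega> \<in> space M \<Longrightarrow> est eps \<omega> \<in> {a..b}"
    and argmax: "\<And>eps \<omega> \<theta>. 0 < eps \<Longrightarrow> \<omega> \<in> space M \<Longrightarrow> \<theta> \<in> {a..b} \<Longrightarrow>
      2 * eps * Z \<theta> \<omega> - F \<theta> \<le> 2 * eps * Z (est eps \<omega>) \<omega> - F (est eps \<omega>)"
  shows "((\<lambda>eps. prob {\<omega> \<in> space M. \<delta> < \<bar>est eps \<omega> - \<theta>\<^sub>0\<bar>}) \<longlongrightarrow> 0) (at_right 0)"
proof -
  let ?B = "\<lambda>N::nat. {\<omega> \<in> space M. \<exists>\<theta>\<in>{a..b}. real N < \<bar>Z \<theta> \<omega>\<bar>}"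
  have far_imp_large_noise: "{\<omega> \<in> space M. \<delta> < \<bar>est eps \<omega> - \<theta>\<^sub>0\<bar>} \<subseteq> ?B N"
    if "0 < eps" "4 * eps * real N < \<kappa>" for eps N
  proof safe
    fix \<omega> assume \<omega>: "\<omega> \<in> space M" "\<delta> < \<bar>est eps \<omega> - \<theta>\<^sub>0\<bar>"
    show "\<exists>\<theta>\<in>{a..b}. real N < \<bar>Z \<theta> \<omega>\<bar>"
    proof (rule ccontr)
      assume "\<not> ?thesis"
      then have "\<kappa> \<le> 4 * eps * real N"
        using est[OF \<open>0 < eps\<close> \<omega>(1)] \<open>0 < eps\<close>
        by (intro argmax_gap_le_noise[OF \<open>\<theta>\<^sub>0 \<in> _\<close> _ separated[OF _ \<omega>(2)]
              argmax[OF \<open>0 < eps\<close> \<omega>(1) \<open>\<theta>\<^sub>0 \<in> _\<close>]]) (auto simp: not_less)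
      with \<open>4 * eps * real N < \<kappa>\<close> show False
        by linarith
    qed
  qed
  have lim: "(\<lambda>N. prob (?B N)) \<longlonglongrightarrow> 0"
    using measure_sup_abs_gt_tendsto_zero[OF \<open>a < b\<close> meas cont] by blast
  show ?thesis
  proof (rule order_tendstoI)
    fix c :: real assume "c < 0"
    then show "\<forall>\<^sub>F eps in at_right 0. c < prob {\<omega> \<in> space M. \<delta> < \<bar>est eps \<omega> - \<theta>\<^sub>0\<bar>}"
      by (auto intro: always_eventually less_le_trans[OF _ measure_nonneg])
  next
    fix c :: real assume "0 < c"
    then obtain N where N: "prob (?B N) < c"
      using order_tendstoD(2)[OF lim] by (auto simp: eventually_sequentially)
    have "prob {\<omega> \<in> space M. \<delta> < \<bar>est eps \<omega> - \<theta>\<^sub>0\<bar>} < c"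
      if "0 < eps" "eps < \<kappa> / (4 * (real N + 1))" for eps
    proof -
      have "4 * eps * real N < \<kappa>"
        using that by (simp add: field_simps)
      then have "prob {\<omega> \<in> space M. \<delta> < \<bar>est eps \<omega> - \<theta>\<^sub>0\<bar>} \<le> prob (?B N)"
        using that by (intro finite_measure_mono far_imp_large_noise sets_Collect_sup_abs_gt meas cont \<open>a < b\<close>)
      with N show ?thesis by linarith
    qed
    moreover have "0 < \<kappa> / (4 * (real N + 1))"
      using \<open>0 < \<kappa>\<close> by simp
    ultimately show "\<forall>\<^sub>F eps in at_right 0. prob {\<omega> \<in> space M. \<delta> < \<bar>est eps \<omega> - \<theta>\<^sub>0\<bar>} < c"
      unfolding eventually_at_right_field by blast
  qed
qed

context
  fixes T th\<^sub>0 :: real and h g q r :: "real \<Rightarrow> real"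
  assumes h_cont: "continuous_on {0..T} h" and g_cont: "continuous_on {0..T} g"
    and q_cont: "continuous_on {0..T} q" and r_cont: "continuous_on {0..T} r"
begin

lemma trend_integrable:
  fixes \<phi> :: "real \<Rightarrow> real \<Rightarrow> real"
  assumes "continuous_on UNIV (\<lambda>z. \<phi> (fst z) (snd z))"
  shows "(\<lambda>t. \<phi> (Mtrend h g th t) (Strend h g q r th\<^sub>0 t)) integrable_on {0..T}"
  unfolding Mtrend_def Strend_def
  by (intro integrable_on_switching_pair assms continuous_intros h_cont g_cont q_cont r_cont)

lemma Phi_increment:
  assumes "0 \<le> x" "x \<le> y" "y \<le> T"
  shows "Phi T h g q r th\<^sub>0 y - Phi T h g q r th\<^sub>0 x =
    integral {x..y} (\<lambda>t. (h t - Strend h g q r th\<^sub>0 t)\<^sup>2 - (g t - Strend h g q r th\<^sub>0 t)\<^sup>2)"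
    (is "_ = integral _ ?d")
proof -
  let ?S = "Strend h g q r th\<^sub>0"
  have restrict: "{x..y} \<inter> {0..T} = {x..y}"
    using assms by auto
  have "Phi T h g q r th\<^sub>0 y - Phi T h g q r th\<^sub>0 x =
      integral {0..T} (\<lambda>t. (Mtrend h g y t - ?S t)\<^sup>2 - (Mtrend h g x t - ?S t)\<^sup>2)"
    unfolding Phi_def
    by (rule integral_diff[symmetric])
       (intro trend_integrable[where \<phi> = "\<lambda>m s. (m - s)\<^sup>2"] continuous_intros)+
  also have "\<dots> = integral {0..T} (\<lambda>t. if t \<in> {x..y} then ?d t else 0)"
    using assms by (intro integral_spike[of "{y}"]) (auto simp: Mtrend_def)
  also have "\<dots> = integral {x..y} ?d"
    by (simp only: integral_restrict_Int restrict)
  finally show ?thesis .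
qed

lemma Phi_increment_before_change:
  assumes "0 \<le> x" "x \<le> y" "y \<le> T" "y \<le> th\<^sub>0"
  shows "Phi T h g q r th\<^sub>0 x - Phi T h g q r th\<^sub>0 y =
    integral {x..y} (\<lambda>t. (h t - g t) * (h t - g t + 2 * q t))"
proof -
  have "Phi T h g q r th\<^sub>0 x - Phi T h g q r th\<^sub>0 y =
      - integral {x..y} (\<lambda>t. (h t - Strend h g q r th\<^sub>0 t)\<^sup>2 - (g t - Strend h g q r th\<^sub>0 t)\<^sup>2)"
    using Phi_increment[OF assms(1-3)] by simp
  also have "\<dots> = integral {x..y} (\<lambda>t. (h t - g t) * (h t - g t + 2 * q t))"
    unfolding integral_neg[symmetric] using assms(4)
    by (intro integral_spike[of "{y}"]) (auto simp: Strend_def power2_eq_square algebra_simps)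
  finally show ?thesis .
qed

lemma Phi_increment_after_change:
  assumes "0 \<le> x" "x \<le> y" "y \<le> T" "th\<^sub>0 \<le> x"
  shows "Phi T h g q r th\<^sub>0 y - Phi T h g q r th\<^sub>0 x =
    integral {x..y} (\<lambda>t. (h t - g t) * (h t - g t - 2 * r t))"
  unfolding Phi_increment[OF assms(1-3)] using assms(4)
  by (intro integral_cong) (auto simp: Strend_def power2_eq_square algebra_simps)

lemma Phi_strict_antimono_before_change:
  assumes "0 \<le> a" "a \<le> th\<^sub>0" "th\<^sub>0 \<le> T"
    and pos: "\<And>t. t \<in> {a<..<th\<^sub>0} \<Longrightarrow> 0 < (h t - g t) * (h t - g t + 2 * q t)"
  shows "strict_antimono_on {a..th\<^sub>0} (Phi T h g q r th\<^sub>0)"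
proof (rule monotone_onI)
  fix x y assume "x \<in> {a..th\<^sub>0}" "y \<in> {a..th\<^sub>0}" "x < y"
  with assms have sub: "{x..y} \<subseteq> {0..T}" by auto
  with assms \<open>x \<in> _\<close> \<open>y \<in> _\<close> \<open>x < y\<close>
  have "0 < integral {x..y} (\<lambda>t. (h t - g t) * (h t - g t + 2 * q t))"
    by (intro integral_pos_of_pos_on_interior pos continuous_intros continuous_on_subset[OF h_cont sub]
          continuous_on_subset[OF g_cont sub] continuous_on_subset[OF q_cont sub]) auto
  with assms \<open>x \<in> _\<close> \<open>y \<in> _\<close> \<open>x < y\<close> show "Phi T h g q r th\<^sub>0 y < Phi T h g q r th\<^sub>0 x"
    using Phi_increment_before_change[of x y] by auto
qed

lemma Phi_strict_mono_after_change:
  assumes "0 \<le> th\<^sub>0" "th\<^sub>0 \<le> b" "b \<le> T"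
    and pos: "\<And>t. t \<in> {th\<^sub>0<..<b} \<Longrightarrow> 0 < (h t - g t) * (h t - g t - 2 * r t)"
  shows "strict_mono_on {th\<^sub>0..b} (Phi T h g q r th\<^sub>0)"
proof (rule strict_mono_onI)
  fix x y assume "x \<in> {th\<^sub>0..b}" "y \<in> {th\<^sub>0..b}" "x < y"
  with assms have sub: "{x..y} \<subseteq> {0..T}" by auto
  with assms \<open>x \<in> _\<close> \<open>y \<in> _\<close> \<open>x < y\<close>
  have "0 < integral {x..y} (\<lambda>t. (h t - g t) * (h t - g t - 2 * r t))"
    by (intro integral_pos_of_pos_on_interior pos continuous_intros continuous_on_subset[OF h_cont sub]
          continuous_on_subset[OF g_cont sub] continuous_on_subset[OF r_cont sub]) auto
  with assms \<open>x \<in> _\<close> \<open>y \<in> _\<close> \<open>x < y\<close> show "Phi T h g q r th\<^sub>0 x < Phi T h g q r th\<^sub>0 y"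
    using Phi_increment_after_change[of x y] by auto
qed

lemma pseudo_lik_eq_exp_Phi:
  assumes "eps \<noteq> 0"
  shows "pseudo_lik T h g q r th\<^sub>0 IW eps th \<omega> =
    exp ((integral {0..T} (\<lambda>t. (Strend h g q r th\<^sub>0 t)\<^sup>2) - Phi T h g q r th\<^sub>0 th) / (2 * eps\<^sup>2)
         + IW th \<omega> / eps)"
proof -
  let ?M = "Mtrend h g th" and ?S = "Strend h g q r th\<^sub>0"
  have MM: "(\<lambda>t. (?M t)\<^sup>2) integrable_on {0..T}"
    and MS: "(\<lambda>t. ?M t * ?S t) integrable_on {0..T}"
    and SS: "(\<lambda>t. (?S t)\<^sup>2) integrable_on {0..T}"
    by (intro trend_integrable[where \<phi> = "\<lambda>m s. m\<^sup>2"] trend_integrable[where \<phi> = "\<lambda>m s. m * s"]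
          trend_integrable[where \<phi> = "\<lambda>m s. s\<^sup>2"] continuous_intros)+
  let ?A = "integral {0..T} (\<lambda>t. ?M t * ?S t)" and ?B = "integral {0..T} (\<lambda>t. (?M t)\<^sup>2)"
    and ?C = "integral {0..T} (\<lambda>t. (?S t)\<^sup>2)"
  have "Phi T h g q r th\<^sub>0 th = integral {0..T} (\<lambda>t. ((?M t)\<^sup>2 - 2 * (?M t * ?S t)) + (?S t)\<^sup>2)"
    unfolding Phi_def by (rule integral_cong) (simp add: power2_eq_square algebra_simps)
  also have "\<dots> = ?B - 2 * ?A + ?C"
    using MM MS SS by (simp add: integral_add integral_diff integrable_diff integrable_on_mult_right)
  finally have "2 * ?A - ?B = ?C - Phi T h g q r th\<^sub>0 th"
    by linarith
  moreover have "(1 / eps\<^sup>2) * (?A + eps * IW th \<omega>) - (1 / (2 * eps\<^sup>2)) * ?B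
      = (2 * ?A - ?B) / (2 * eps\<^sup>2) + IW th \<omega> / eps"
    using assms by (simp add: field_simps power2_eq_square)
  ultimately show ?thesis
    unfolding pseudo_lik_def by simp
qed

lemma pseudo_lik_le_iff:
  assumes "0 < eps"
  shows "pseudo_lik T h g q r th\<^sub>0 IW eps th \<omega> \<le> pseudo_lik T h g q r th\<^sub>0 IW eps th' \<omega> \<longleftrightarrow>
    2 * eps * IW th \<omega> - Phi T h g q r th\<^sub>0 th \<le> 2 * eps * IW th' \<omega> - Phi T h g q r th\<^sub>0 th'"
proof -
  have "(C - Phi T h g q r th\<^sub>0 s) / (2 * eps\<^sup>2) + IW s \<omega> / eps
      = (C + (2 * eps * IW s \<omega> - Phi T h g q r th\<^sub>0 s)) / (2 * eps\<^sup>2)" for C s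
    using assms by (simp add: field_simps power2_eq_square)
  then show ?thesis
    using assms by (simp add: pseudo_lik_eq_exp_Phi divide_le_cancel)
qed

lemma pseudo_MLE_consistent:
  fixes P :: "'a measure" and IW est :: "real \<Rightarrow> 'a \<Rightarrow> real"
  assumes "prob_space P" "\<alpha> < th\<^sub>0" "th\<^sub>0 < \<beta>"
    and anti: "strict_antimono_on {\<alpha>..th\<^sub>0} (Phi T h g q r th\<^sub>0)"
    and mono: "strict_mono_on {th\<^sub>0..\<beta>} (Phi T h g q r th\<^sub>0)"
    and meas: "\<And>\<theta>. \<theta> \<in> {\<alpha>..\<beta>} \<Longrightarrow> IW \<theta> \<in> borel_measurable P"
    and cont: "\<And>\<omega>. \<omega> \<in> space P \<Longrightarrow> continuous_on {\<alpha>..\<beta>} (\<lambda>\<theta>. IW \<theta> \<omega>)"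
    and est_max: "\<And>eps \<omega>. 0 < eps \<Longrightarrow> \<omega> \<in> space P \<Longrightarrow> est eps \<omega> \<in> {\<alpha>..\<beta>} \<and>
      (\<forall>\<theta>\<in>{\<alpha>..\<beta>}. pseudo_lik T h g q r th\<^sub>0 IW eps \<theta> \<omega>
                    \<le> pseudo_lik T h g q r th\<^sub>0 IW eps (est eps \<omega>) \<omega>)"
    and "0 < \<delta>"
  shows "((\<lambda>eps. measure P {\<omega>\<in>space P. \<delta> < \<bar>est eps \<omega> - th\<^sub>0\<bar>}) \<longlongrightarrow> 0) (at_right 0)"
proof -
  interpret prob_space P
    by fact
  obtain \<kappa> where "0 < \<kappa>" and separated:
    "\<And>\<theta>. \<theta> \<in> {\<alpha>..\<beta>} \<Longrightarrow> \<delta> < \<bar>\<theta> - th\<^sub>0\<bar> \<Longrightarrow> Phi T h g q r th\<^sub>0 th\<^sub>0 + \<kappa> \<le> Phi T h g q r th\<^sub>0 \<theta>"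
    using well_separated_min[OF anti mono assms(2,3) \<open>0 < \<delta>\<close>] by blast
  have est: "est eps \<omega> \<in> {\<alpha>..\<beta>}" if "0 < eps" "\<omega> \<in> space P" for eps \<omega>
    using est_max[OF that] by (rule conjunct1)
  have argmax: "2 * eps * IW \<theta> \<omega> - Phi T h g q r th\<^sub>0 \<theta>
      \<le> 2 * eps * IW (est eps \<omega>) \<omega> - Phi T h g q r th\<^sub>0 (est eps \<omega>)"
    if "0 < eps" "\<omega> \<in> space P" "\<theta> \<in> {\<alpha>..\<beta>}" for eps \<omega> \<theta>
    using conjunct2[OF est_max[OF that(1,2)]] that(3)
    unfolding pseudo_lik_le_iff[OF \<open>0 < eps\<close>] by (rule bspec)
  have "th\<^sub>0 \<in> {\<alpha>..\<beta>}"
    using assms(2,3) by simp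
  from argmax_consistent[OF _ meas cont this \<open>0 < \<kappa>\<close> separated est argmax]
  show ?thesis
    using assms(2,3) by simp
qed

end

theorem proposition2:
  fixes P :: "'a measure" and W :: "real \<Rightarrow> 'a \<Rightarrow> real"
    and T \<alpha> \<beta> th0 :: real and h g q r :: "real \<Rightarrow> real"
    and IW :: "real \<Rightarrow> 'a \<Rightarrow> real"
    and est :: "real \<Rightarrow> 'a \<Rightarrow> real"
  assumes "0 < \<alpha>" "\<alpha> < \<beta>" "\<beta> < T" "\<alpha> < th0" "th0 < \<beta>"
    and "continuous_on {0..T} h" "continuous_on {0..T} g"
    and "continuous_on {0..T} q" "continuous_on {0..T} r"
    and W: "wiener_process P T W"
    and IW: "\<forall>th\<in>{\<alpha>..\<beta>}. wiener_integral P T W (Mtrend h g th) (IW th)"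
    and IW_cont: "\<forall>\<omega>\<in>space P. continuous_on {\<alpha>..\<beta>} (\<lambda>th. IW th \<omega>)"
    and est_meas: "\<forall>eps>0. est eps \<in> borel_measurable P"
    and est_max: "\<forall>eps>0. \<forall>\<omega>\<in>space P. est eps \<omega> \<in> {\<alpha>..\<beta>} \<and>
        (\<forall>th\<in>{\<alpha>..\<beta>}. pseudo_lik T h g q r th0 IW eps th \<omega>
                        \<le> pseudo_lik T h g q r th0 IW eps (est eps \<omega>) \<omega>)"
    and hg: "\<forall>t\<in>{\<alpha>..\<beta>}. h t - g t > 0"
    and hq: "\<forall>th\<in>{\<alpha><..<\<beta>}. q th > (g th - h th) / 2"
    and hr: "\<forall>th\<in>{\<alpha><..<\<beta>}. r th < (h th - g th) / 2"
  shows "(\<forall>x y. \<alpha> < x \<and> x < y \<and> y \<le> th0 \<longrightarrow> Phi T h g q r th0 y < Phi T h g q r th0 x)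
       \<and> (\<forall>x y. th0 \<le> x \<and> x < y \<and> y < \<beta> \<longrightarrow> Phi T h g q r th0 x < Phi T h g q r th0 y)
       \<and> (\<forall>th\<in>{\<alpha><..<\<beta>}. th \<noteq> th0 \<longrightarrow> Phi T h g q r th0 th0 < Phi T h g q r th0 th)
       \<and> (\<forall>\<delta>>0. ((\<lambda>eps. measure P {\<omega>\<in>space P. \<delta> < \<bar>est eps \<omega> - th0\<bar>}) \<longlongrightarrow> 0) (at_right 0))"
proof -
  let ?Phi = "Phi T h g q r th0"
  note trends_cont = assms(6-9)
  have factors_pos: "0 < h t - g t" "0 < h t - g t + 2 * q t" "0 < h t - g t - 2 * r t"
    if "t \<in> {\<alpha><..<\<beta>}" for t
    using hg hq hr that by (auto simp: field_simps)
  have anti: "strict_antimono_on {\<alpha>..th0} ?Phi"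
    by (rule Phi_strict_antimono_before_change[OF trends_cont])
       (use assms(1-5) factors_pos in auto)
  have mono: "strict_mono_on {th0..\<beta>} ?Phi"
    by (rule Phi_strict_mono_after_change[OF trends_cont])
       (use assms(1-5) factors_pos in auto)
  have "((\<lambda>eps. measure P {\<omega>\<in>space P. \<delta> < \<bar>est eps \<omega> - th0\<bar>}) \<longlongrightarrow> 0) (at_right 0)"
    if "0 < \<delta>" for \<delta>
  proof (rule pseudo_MLE_consistent[OF trends_cont _ assms(4,5) anti mono _ _ _ that])
    show "prob_space P"
      using W unfolding wiener_process_def by (rule conjunct1)
    show "IW \<theta> \<in> borel_measurable P" if "\<theta> \<in> {\<alpha>..\<beta>}" for \<theta>
      using bspec[OF IW that] unfolding wiener_integral_def by (rule conjunct1)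
  qed (fact IW_cont[rule_format] est_max[rule_format])+
  show ?thesis
  proof (intro conjI allI impI ballI)
    fix x y assume "\<alpha> < x \<and> x < y \<and> y \<le> th0"
    then show "?Phi y < ?Phi x"
      using monotone_onD[OF anti, of x y] by auto
  next
    fix x y assume "th0 \<le> x \<and> x < y \<and> y < \<beta>"
    then show "?Phi x < ?Phi y"
      using strict_mono_onD[OF mono, of x y] by auto
  next
    fix \<theta> assume "\<theta> \<in> {\<alpha><..<\<beta>}" "\<theta> \<noteq> th0"
    then show "?Phi th0 < ?Phi \<theta>"
      using monotone_onD[OF anti, of \<theta> th0] strict_mono_onD[OF mono, of th0 \<theta>] assms(4,5)
      by (cases "\<theta> < th0") auto
  qed fact
qed

end
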